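(* Let $H$ and $K$ be finite groups such that at least one of them is solvable. Then $\mathrm{MaxDim}(H \times K) = \mathrm{MaxDim}(H) + \mathrm{MaxDim}(K)$.
   Context: All groups are finite. A finite set $\{H_1,\dots,H_n\}$ of subgroups of a group $G$ is in general position if for every $1 \le j \le n$, $\bigcap_{i \neq j} H_i \supsetneq \bigcap_{i} H_i$. $\mathrm{MaxDim}(G)$ is the largest cardinality of a collection of maximal subgroups of $G$ that is in general position. *)

theory Defs
  imports "HOL-Algebra.Solvable_Groups"
begin

definition maximal_subgroup :: "'a set \<Rightarrow> ('a, 'b) monoid_scheme \<Rightarrow> bool" where
  "maximal_subgroup M G \<longleftrightarrow> subgroup M G \<and> M \<noteq> carrier G \<and>
     (\<forall>H. subgroup H G \<and> M \<subseteq> H \<longrightarrow> H = M \<or> H = carrier G)"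

text \<open>Intersections are taken inside carrier G, so that the
  intersection of the empty family is G itself.\<close>
definition general_position :: "('a, 'b) monoid_scheme \<Rightarrow> 'a set set \<Rightarrow> bool" where
  "general_position G S \<longleftrightarrow> finite S \<and>
     (\<forall>H\<in>S. carrier G \<inter> \<Inter>(S - {H}) \<supset> carrier G \<inter> \<Inter>S)"

definition MaxDim :: "('a, 'b) monoid_scheme \<Rightarrow> nat" where
  "MaxDim G = Max {card S | S. (\<forall>M\<in>S. maximal_subgroup M G) \<and> general_position G S}"

end

(* Every maximal subgroup of H \<times> K either contains one of the factors, and is then A \<times> K or
   H \<times> B with A, B maximal in H, K, or is "diagonal". A family of the first kind is in general
   position exactly when its H-part and its K-part are, which gives MaxDim H + MaxDim K as a lower
   bound and as an upper bound for families without diagonal members.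

   For a diagonal maximal subgroup M, the slices A = M \<inter> H and B = M \<inter> K are normal and
   maximal among normal subgroups. If H, say, is solvable, A contains the commutators of H, so B
   contains those of K; hence A \<times> K and H \<times> B are maximal normal subgroups of H \<times> K, and
   their intersection A \<times> B lies in M. In a family in general position, the intersection J of
   the members other than M is not contained in M, so it escapes A \<times> K or H \<times> B; that subgroup
   then supplements J, and it can replace M without destroying general position. Repeating this
   removes all diagonal members. *)

theory Submission
  imports Defs "HOL-Algebra.SndIsomorphismGrp"
begin

lemma general_position_iff:
  "general_position G S \<longleftrightarrow> finite S \<and> (\<forall>X\<in>S. \<not> carrier G \<inter> \<Inter>(S - {X}) \<subseteq> X)"
proof -
  have "carrier G \<inter> \<Inter>(S - {X}) \<supset> carrier G \<inter> \<Inter>S \<longleftrightarrow> \<not> carrier G \<inter> \<Inter>(S - {X}) \<subseteq> X"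
    if "X \<in> S" for X
    using that by auto
  then show ?thesis
    unfolding general_position_def by auto
qed

lemma finite_MaxDim_candidates:
  assumes "finite (carrier G)"
  shows "finite {card S | S. (\<forall>M\<in>S. maximal_subgroup M G) \<and> general_position G S}"
proof -
  have "{card S | S. (\<forall>M\<in>S. maximal_subgroup M G) \<and> general_position G S}
          \<subseteq> card ` Pow (Pow (carrier G))"
  proof
    fix x assume "x \<in> {card S | S. (\<forall>M\<in>S. maximal_subgroup M G) \<and> general_position G S}"
    then obtain S where "x = card S" "\<forall>M\<in>S. maximal_subgroup M G" by blast
    then have "S \<in> Pow (Pow (carrier G))"
      unfolding maximal_subgroup_def using subgroup.subset by blast
    then show "x \<in> card ` Pow (Pow (carrier G))"
      using \<open>x = card S\<close> by blast
  qed
  then show ?thesis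
    using assms by (simp add: finite_subset)
qed

lemma card_le_MaxDim:
  assumes "finite (carrier G)" "\<forall>M\<in>S. maximal_subgroup M G" "general_position G S"
  shows "card S \<le> MaxDim G"
  unfolding MaxDim_def using finite_MaxDim_candidates[OF assms(1)] assms(2,3)
  by (intro Max_ge) auto

lemma MaxDim_attained:
  assumes "finite (carrier G)"
  obtains S where "\<forall>M\<in>S. maximal_subgroup M G" "general_position G S" "card S = MaxDim G"
proof -
  have "general_position G {}"
    unfolding general_position_def by simp
  then have "MaxDim G \<in> {card S | S. (\<forall>M\<in>S. maximal_subgroup M G) \<and> general_position G S}"
    unfolding MaxDim_def using finite_MaxDim_candidates[OF assms] by (intro Max_in) auto
  then show ?thesis
    using that by auto
qed

lemma (in group) maximal_subgroup_eq_carrier: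
  assumes "maximal_subgroup M G" "subgroup X G" "M \<subseteq> X" "\<not> X \<subseteq> M"
  shows "X = carrier G"
  using assms unfolding maximal_subgroup_def by blast

lemma (in group) normal_set_mult_maximal_eq_carrier:
  assumes "maximal_subgroup M G" "N \<lhd> G" "\<not> N \<subseteq> M"
  shows "N <#> M = carrier G"
proof -
  interpret second_isomorphism_grp N G M
    using assms unfolding second_isomorphism_grp_def second_isomorphism_grp_axioms_def
      maximal_subgroup_def by blast
  have "\<not> N <#> M \<subseteq> M"
    using assms(3) H_contained_in_set_mult by blast
  then show ?thesis
    using maximal_subgroup_eq_carrier[OF assms(1) normal_set_mult_subgroup S_contained_in_set_mult]
    by blast
qed

lemma (in group) maximal_normal_set_mult_eq_carrier:
  assumes "maximal_subgroup N G" "N \<lhd> G" "subgroup X G" "\<not> X \<subseteq> N"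
  shows "N <#> X = carrier G"
proof -
  interpret second_isomorphism_grp N G X
    using assms unfolding second_isomorphism_grp_def second_isomorphism_grp_axioms_def by blast
  have "\<not> N <#> X \<subseteq> N"
    using assms(4) S_contained_in_set_mult by blast
  then show ?thesis
    using maximal_subgroup_eq_carrier[OF assms(1) normal_set_mult_subgroup H_contained_in_set_mult]
    by blast
qed

lemma (in group_hom) subgroup_vimage:
  assumes "subgroup N H"
  shows "subgroup {x \<in> carrier G. h x \<in> N} G"
proof
  show "\<one>\<^bsub>G\<^esub> \<in> {x \<in> carrier G. h x \<in> N}"
    using assms by (simp add: subgroup.one_closed)
  fix x y assume "x \<in> {x \<in> carrier G. h x \<in> N}" "y \<in> {x \<in> carrier G. h x \<in> N}"
  then show "x \<otimes>\<^bsub>G\<^esub> y \<in> {x \<in> carrier G. h x \<in> N}"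
    using assms by (simp add: subgroup.m_closed)
next
  fix x assume "x \<in> {x \<in> carrier G. h x \<in> N}"
  then show "inv\<^bsub>G\<^esub> x \<in> {x \<in> carrier G. h x \<in> N}"
    using assms by (simp add: subgroup.m_inv_closed)
qed auto

lemma (in group_hom) normal_vimage:
  assumes "N \<lhd> H"
  shows "{x \<in> carrier G. h x \<in> N} \<lhd> G"
  unfolding G.normal_inv_iff
proof (intro conjI ballI)
  show "subgroup {x \<in> carrier G. h x \<in> N} G"
    using subgroup_vimage[OF normal_imp_subgroup[OF assms]] .
  fix g x assume "g \<in> carrier G" "x \<in> {x \<in> carrier G. h x \<in> N}"
  then show "g \<otimes>\<^bsub>G\<^esub> x \<otimes>\<^bsub>G\<^esub> inv\<^bsub>G\<^esub> g \<in> {x \<in> carrier G. h x \<in> N}"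
    using assms by (simp add: normal.inv_op_closed2)
qed

lemma (in group) solvable_perfect_trivial:
  assumes "solvable G" "derived G (carrier G) = carrier G"
  shows "carrier G = {\<one>}"
proof -
  obtain n where "(derived G ^^ n) (carrier G) = {\<one>}"
    using assms(1) solvable_iff_trivial_derived_seq by blast
  moreover have "(derived G ^^ n) (carrier G) = carrier G"
    by (induction n) (simp_all add: assms(2))
  ultimately show ?thesis
    by simp
qed

lemma (in group) derived_subset_maximal_normal:
  assumes "solvable G" "N \<lhd> G" "N \<noteq> carrier G"
    and maximal: "\<And>N'. N' \<lhd> G \<Longrightarrow> N \<subseteq> N' \<Longrightarrow> N' = N \<or> N' = carrier G"
  shows "derived G (carrier G) \<subseteq> N"
proof -
  interpret N: normal N G by fact
  let ?Q = "G Mod N"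
  interpret Q: group ?Q
    using N.factorgroup_is_group .
  have hom: "group_hom G ?Q (\<lambda>x. N #> x)"
    unfolding group_hom_def group_hom_axioms_def using N.r_coset_hom_Mod Q.is_group is_group by blast
  have surj: "(\<lambda>x. N #> x) ` carrier G = carrier ?Q"
    by (auto simp: FactGroup_def RCOSETS_def)
  let ?E = "derived ?Q (carrier ?Q)"
  have E: "?E \<lhd> ?Q"
    by (rule Q.derived_self_is_normal)
  have "?E \<noteq> carrier ?Q"
  proof
    assume "?E = carrier ?Q"
    then have Q1: "carrier ?Q = {N}"
      using Q.solvable_perfect_trivial group_hom.surj_hom_imp_solvable[OF hom surj assms(1)] by simp
    have "x \<in> N" if "x \<in> carrier G" for x
    proof -
      have "N #> x = N"
        using that surj Q1 by blast
      then show ?thesis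
        using rcos_self[OF that N.subgroup_axioms] by simp
    qed
    then show False
      using assms(3) N.subset by blast
  qed
  \<comment> \<open>The preimage of the derived subgroup of G/N is normal, contains N, and is proper because
      a solvable perfect group is trivial.\<close>
  define P where "P = {x \<in> carrier G. N #> x \<in> ?E}"
  have "P \<lhd> G"
    unfolding P_def by (rule group_hom.normal_vimage[OF hom E])
  moreover have "N \<subseteq> P"
  proof
    fix x assume "x \<in> N"
    then have "N #> x = \<one>\<^bsub>?Q\<^esub>"
      using N.rcos_const is_group by simp
    then show "x \<in> P"
      unfolding P_def using \<open>x \<in> N\<close> N.subset subgroup.one_closed[OF normal_imp_subgroup[OF E]] by auto
  qed
  moreover have "P \<noteq> carrier G"
  proof
    assume "P = carrier G"
    have "carrier ?Q \<subseteq> ?E"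
    proof
      fix q assume "q \<in> carrier ?Q"
      then obtain x where "x \<in> carrier G" "q = N #> x"
        using surj by blast
      then show "q \<in> ?E"
        using \<open>P = carrier G\<close> unfolding P_def by blast
    qed
    then show False
      using \<open>?E \<noteq> carrier ?Q\<close> Q.derived_in_carrier[of "carrier ?Q"] by blast
  qed
  ultimately have "P = N"
    using maximal by blast
  have "(\<lambda>x. N #> x) ` derived G (carrier G) = ?E"
    using group_hom.derived_img[OF hom, of "carrier G"] surj by simp
  then have "derived G (carrier G) \<subseteq> P"
    unfolding P_def using derived_in_carrier[of "carrier G"] by blast
  then show ?thesis
    using \<open>P = N\<close> by simp
qed

lemma (in group) normal_if_derived_set_subset:
  assumes "subgroup X G" "derived_set G (carrier G) \<subseteq> X"
  shows "X \<lhd> G"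
  unfolding normal_inv_iff
proof (intro conjI assms(1) ballI)
  fix x h assume x: "x \<in> carrier G" and h: "h \<in> X"
  have hG: "h \<in> carrier G"
    using h subgroup.subset[OF assms(1)] by blast
  have "x \<otimes> h \<otimes> inv x \<otimes> inv h \<in> X"
    using assms(2) x hG by blast
  then have "x \<otimes> h \<otimes> inv x \<otimes> inv h \<otimes> h \<in> X"
    using h subgroup.m_closed[OF assms(1)] by blast
  then show "x \<otimes> h \<otimes> inv x \<in> X"
    using x hG by (simp add: m_assoc)
qed

lemma (in group) maximal_subgroup_if_maximal_normal:
  assumes "N \<lhd> G" "N \<noteq> carrier G" "derived_set G (carrier G) \<subseteq> N"
    and maximal: "\<And>N'. N' \<lhd> G \<Longrightarrow> N \<subseteq> N' \<Longrightarrow> N' = N \<or> N' = carrier G"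
  shows "maximal_subgroup N G"
  unfolding maximal_subgroup_def
proof (intro conjI allI impI)
  show "subgroup N G"
    using assms(1) by (rule normal_imp_subgroup)
  fix X assume X: "subgroup X G \<and> N \<subseteq> X"
  then have "X \<lhd> G"
    using assms(3) normal_if_derived_set_subset[of X] by blast
  then show "X = N \<or> X = carrier G"
    using X maximal by blast
qed (rule assms(2))

lemma (in group) general_position_exchange:
  assumes gp: "general_position G S" and subgroups: "\<And>X. X \<in> S \<Longrightarrow> subgroup X G"
    and "M \<in> S" and P: "subgroup P G" "P \<noteq> carrier G"
    and covering: "P <#> (carrier G \<inter> \<Inter>(S - {M})) = carrier G"
  shows "general_position G (insert P (S - {M}))" and "P \<notin> S - {M}"
proof -
  let ?J = "carrier G \<inter> \<Inter>(S - {M})"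
  have J_not_in_P: "\<not> ?J \<subseteq> P"
  proof
    assume "?J \<subseteq> P"
    then have "P <#> ?J \<subseteq> P"
      unfolding set_mult_def using subgroup.m_closed[OF P(1)] by auto
    then show False
      using covering P(2) subgroup.subset[OF P(1)] by simp
  qed
  then show P_new: "P \<notin> S - {M}"
    by blast
  have witness: "\<not> carrier G \<inter> \<Inter>(insert P (S - {M}) - {X}) \<subseteq> X"
    if X: "X \<in> S - {M}" for X
  proof -
    obtain m where m: "m \<in> carrier G \<inter> \<Inter>(S - {X})" "m \<notin> X"
      using gp X unfolding general_position_iff by blast
    then have "m \<in> P <#> ?J"
      using covering by blast
    then obtain p j where p: "p \<in> P" and j: "j \<in> ?J" and "m = p \<otimes> j"
      unfolding set_mult_def by auto
    have pG: "p \<in> carrier G" and jG: "j \<in> carrier G"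
      using p j subgroup.subset[OF P(1)] by auto
    then have p_eq: "p = m \<otimes> inv j"
      using \<open>m = p \<otimes> j\<close> by (simp add: m_assoc)
    have "p \<in> Y" if Y: "Y \<in> S - {M, X}" for Y
    proof -
      have "m \<in> Y" "j \<in> Y"
        using Y m(1) j by auto
      then show ?thesis
        unfolding p_eq using subgroups[of Y] Y by (simp add: subgroup.m_closed subgroup.m_inv_closed)
    qed
    moreover have "p \<notin> X"
    proof
      assume "p \<in> X"
      moreover have "j \<in> X"
        using X j by blast
      ultimately have "p \<otimes> j \<in> X"
        using X subgroups[of X] by (simp add: subgroup.m_closed)
      then show False
        using \<open>m = p \<otimes> j\<close> m(2) by simp
    qed
    moreover have "insert P (S - {M}) - {X} = insert P (S - {M, X})"
      using X P_new by blast
    ultimately show ?thesis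
      using p pG by blast
  qed
  have "finite S"
    using gp unfolding general_position_def by blast
  moreover have "insert P (S - {M}) - {P} = S - {M}"
    using P_new by blast
  ultimately show "general_position G (insert P (S - {M}))"
    unfolding general_position_iff using J_not_in_P witness by auto
qed

locale group_pair = H: group H + K: group K
  for H :: "('a, 'c) monoid_scheme" and K :: "('b, 'd) monoid_scheme"
begin

abbreviation G where "G \<equiv> H \<times>\<times> K"

sublocale G: group G
  by (rule DirProd_group[OF H.is_group K.is_group])

definition fst_slice :: "('a \<times> 'b) set \<Rightarrow> 'a set" where
  "fst_slice M = {h \<in> carrier H. (h, \<one>\<^bsub>K\<^esub>) \<in> M}"

definition snd_slice :: "('a \<times> 'b) set \<Rightarrow> 'b set" where
  "snd_slice M = {k \<in> carrier K. (\<one>\<^bsub>H\<^esub>, k) \<in> M}"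

lemma subgroup_fst_slice: "subgroup M G \<Longrightarrow> subgroup (fst_slice M) H"
  unfolding fst_slice_def
  by (rule group_hom.subgroup_vimage)
    (auto simp: group_hom_def group_hom_axioms_def G.is_group H.is_group intro!: homI)

lemma subgroup_snd_slice: "subgroup M G \<Longrightarrow> subgroup (snd_slice M) K"
  unfolding snd_slice_def
  by (rule group_hom.subgroup_vimage)
    (auto simp: group_hom_def group_hom_axioms_def G.is_group K.is_group intro!: homI)

lemma Times_fst_slice:
  assumes "subgroup X G" "{\<one>\<^bsub>H\<^esub>} \<times> carrier K \<subseteq> X"
  shows "fst_slice X \<times> carrier K = X"
proof
  show "fst_slice X \<times> carrier K \<subseteq> X"
  proof (clarify)
    fix h k assume "h \<in> fst_slice X" "k \<in> carrier K"
    then have "(h, \<one>\<^bsub>K\<^esub>) \<in> X" "(\<one>\<^bsub>H\<^esub>, k) \<in> X" "h \<in> carrier H"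
      using assms(2) unfolding fst_slice_def by auto
    from subgroup.m_closed[OF assms(1) this(1,2)] show "(h, k) \<in> X"
      using \<open>h \<in> carrier H\<close> \<open>k \<in> carrier K\<close> by simp
  qed
  show "X \<subseteq> fst_slice X \<times> carrier K"
  proof (clarify)
    fix h k assume "(h, k) \<in> X"
    moreover have hk: "h \<in> carrier H" "k \<in> carrier K"
      using \<open>(h, k) \<in> X\<close> subgroup.subset[OF assms(1)] by auto
    moreover have "(\<one>\<^bsub>H\<^esub>, inv\<^bsub>K\<^esub> k) \<in> X"
      using assms(2) hk by auto
    ultimately have "(h, k) \<otimes>\<^bsub>G\<^esub> (\<one>\<^bsub>H\<^esub>, inv\<^bsub>K\<^esub> k) \<in> X"
      using assms(1) by (simp only: subgroup.m_closed)
    then show "h \<in> fst_slice X \<and> k \<in> carrier K"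
      using hk unfolding fst_slice_def by simp
  qed
qed

lemma carrier_Times_snd_slice:
  assumes "subgroup X G" "carrier H \<times> {\<one>\<^bsub>K\<^esub>} \<subseteq> X"
  shows "carrier H \<times> snd_slice X = X"
proof
  show "carrier H \<times> snd_slice X \<subseteq> X"
  proof (clarify)
    fix h k assume "h \<in> carrier H" "k \<in> snd_slice X"
    then have "(h, \<one>\<^bsub>K\<^esub>) \<in> X" "(\<one>\<^bsub>H\<^esub>, k) \<in> X" "k \<in> carrier K"
      using assms(2) unfolding snd_slice_def by auto
    from subgroup.m_closed[OF assms(1) this(1,2)] show "(h, k) \<in> X"
      using \<open>h \<in> carrier H\<close> \<open>k \<in> carrier K\<close> by simp
  qed
  show "X \<subseteq> carrier H \<times> snd_slice X"
  proof (clarify)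
    fix h k assume "(h, k) \<in> X"
    moreover have hk: "h \<in> carrier H" "k \<in> carrier K"
      using \<open>(h, k) \<in> X\<close> subgroup.subset[OF assms(1)] by auto
    moreover have "(inv\<^bsub>H\<^esub> h, \<one>\<^bsub>K\<^esub>) \<in> X"
      using assms(2) hk by auto
    ultimately have "(inv\<^bsub>H\<^esub> h, \<one>\<^bsub>K\<^esub>) \<otimes>\<^bsub>G\<^esub> (h, k) \<in> X"
      using assms(1) by (simp only: subgroup.m_closed)
    then show "h \<in> carrier H \<and> k \<in> snd_slice X"
      using hk unfolding snd_slice_def by simp
  qed
qed

lemma maximal_subgroup_Times_carrier_iff:
  "maximal_subgroup (A \<times> carrier K) G \<longleftrightarrow> maximal_subgroup A H"
proof
  assume max: "maximal_subgroup (A \<times> carrier K) G"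
  then have sub: "subgroup (A \<times> carrier K) G"
    unfolding maximal_subgroup_def by blast
  then have A: "A \<subseteq> carrier H"
    using subgroup.subset K.one_closed by fastforce
  then have "fst_slice (A \<times> carrier K) = A"
    unfolding fst_slice_def by auto
  then have "subgroup A H"
    using subgroup_fst_slice[OF sub] by simp
  show "maximal_subgroup A H"
    unfolding maximal_subgroup_def
  proof (intro conjI allI impI)
    show "A \<noteq> carrier H"
      using max unfolding maximal_subgroup_def by auto
    fix Y assume Y: "subgroup Y H \<and> A \<subseteq> Y"
    then have "Y \<times> carrier K = A \<times> carrier K \<or> Y \<times> carrier K = carrier G"
      using max DirProd_subgroups[OF H.is_group _ K.is_group K.subgroup_self]
      unfolding maximal_subgroup_def by blast
    then show "Y = A \<or> Y = carrier H"
      using K.one_closed by (auto simp: set_eq_iff)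
  qed fact
next
  assume max: "maximal_subgroup A H"
  then have A: "subgroup A H" "A \<noteq> carrier H"
    unfolding maximal_subgroup_def by auto
  show "maximal_subgroup (A \<times> carrier K) G"
    unfolding maximal_subgroup_def
  proof (intro conjI allI impI)
    show "subgroup (A \<times> carrier K) G"
      using DirProd_subgroups[OF H.is_group A(1) K.is_group K.subgroup_self] .
    show "A \<times> carrier K \<noteq> carrier G"
      using A subgroup.subset K.one_closed by fastforce
    fix X assume X: "subgroup X G \<and> A \<times> carrier K \<subseteq> X"
    then have "{\<one>\<^bsub>H\<^esub>} \<times> carrier K \<subseteq> X"
      using subgroup.one_closed[OF A(1)] by blast
    then have X_eq: "fst_slice X \<times> carrier K = X"
      using Times_fst_slice X by blast
    have "A \<subseteq> fst_slice X"
      using X subgroup.subset[OF A(1)] unfolding fst_slice_def by auto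
    then have "fst_slice X = A \<or> fst_slice X = carrier H"
      using max subgroup_fst_slice X unfolding maximal_subgroup_def by blast
    then show "X = A \<times> carrier K \<or> X = carrier G"
      using X_eq by auto
  qed
qed

lemma maximal_subgroup_carrier_Times_iff:
  "maximal_subgroup (carrier H \<times> B) G \<longleftrightarrow> maximal_subgroup B K"
proof
  assume max: "maximal_subgroup (carrier H \<times> B) G"
  then have sub: "subgroup (carrier H \<times> B) G"
    unfolding maximal_subgroup_def by blast
  then have B: "B \<subseteq> carrier K"
    using subgroup.subset H.one_closed by fastforce
  then have "snd_slice (carrier H \<times> B) = B"
    unfolding snd_slice_def by auto
  then have "subgroup B K"
    using subgroup_snd_slice[OF sub] by simp
  show "maximal_subgroup B K"
    unfolding maximal_subgroup_def
  proof (intro conjI allI impI)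
    show "B \<noteq> carrier K"
      using max unfolding maximal_subgroup_def by auto
    fix Y assume Y: "subgroup Y K \<and> B \<subseteq> Y"
    then have "carrier H \<times> Y = carrier H \<times> B \<or> carrier H \<times> Y = carrier G"
      using max DirProd_subgroups[OF H.is_group H.subgroup_self K.is_group]
      unfolding maximal_subgroup_def by blast
    then show "Y = B \<or> Y = carrier K"
      using H.one_closed by (auto simp: set_eq_iff)
  qed fact
next
  assume max: "maximal_subgroup B K"
  then have B: "subgroup B K" "B \<noteq> carrier K"
    unfolding maximal_subgroup_def by auto
  show "maximal_subgroup (carrier H \<times> B) G"
    unfolding maximal_subgroup_def
  proof (intro conjI allI impI)
    show "subgroup (carrier H \<times> B) G"
      using DirProd_subgroups[OF H.is_group H.subgroup_self K.is_group B(1)] .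
    show "carrier H \<times> B \<noteq> carrier G"
      using B subgroup.subset H.one_closed by fastforce
    fix X assume X: "subgroup X G \<and> carrier H \<times> B \<subseteq> X"
    then have "carrier H \<times> {\<one>\<^bsub>K\<^esub>} \<subseteq> X"
      using subgroup.one_closed[OF B(1)] by blast
    then have X_eq: "carrier H \<times> snd_slice X = X"
      using carrier_Times_snd_slice X by blast
    have "B \<subseteq> snd_slice X"
      using X subgroup.subset[OF B(1)] unfolding snd_slice_def by auto
    then have "snd_slice X = B \<or> snd_slice X = carrier K"
      using max subgroup_snd_slice X unfolding maximal_subgroup_def by blast
    then show "X = carrier H \<times> B \<or> X = carrier G"
      using X_eq by auto
  qed
qed

lemma fst_image_maximal_subgroup:
  assumes "maximal_subgroup M G" "\<not> {\<one>\<^bsub>H\<^esub>} \<times> carrier K \<subseteq> M" "h \<in> carrier H"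
  shows "\<exists>k\<in>carrier K. (h, k) \<in> M"
proof -
  have "{\<one>\<^bsub>H\<^esub>} \<times> carrier K \<lhd> G"
    using H.DirProd_normal[OF K.is_group H.one_is_normal K.normal_self] .
  then have "({\<one>\<^bsub>H\<^esub>} \<times> carrier K) <#>\<^bsub>G\<^esub> M = carrier G"
    using G.normal_set_mult_maximal_eq_carrier assms(1,2) by blast
  then have "(h, \<one>\<^bsub>K\<^esub>) \<in> ({\<one>\<^bsub>H\<^esub>} \<times> carrier K) <#>\<^bsub>G\<^esub> M"
    using assms(3) by simp
  then obtain k m where k: "k \<in> carrier K" and m: "m \<in> M"
    and eq: "(h, \<one>\<^bsub>K\<^esub>) = (\<one>\<^bsub>H\<^esub>, k) \<otimes>\<^bsub>G\<^esub> m"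
    unfolding set_mult_def by auto
  obtain a b where m_eq: "m = (a, b)"
    by (cases m)
  have "a \<in> carrier H"
    using m m_eq assms(1) subgroup.subset unfolding maximal_subgroup_def by fastforce
  then have "a = h"
    using eq m_eq by simp
  moreover have "b \<in> carrier K"
    using m m_eq assms(1) subgroup.subset unfolding maximal_subgroup_def by fastforce
  ultimately show ?thesis
    using m m_eq by blast
qed

lemma snd_image_maximal_subgroup:
  assumes "maximal_subgroup M G" "\<not> carrier H \<times> {\<one>\<^bsub>K\<^esub>} \<subseteq> M" "k \<in> carrier K"
  shows "\<exists>h\<in>carrier H. (h, k) \<in> M"
proof -
  have "carrier H \<times> {\<one>\<^bsub>K\<^esub>} \<lhd> G"
    using H.DirProd_normal[OF K.is_group H.normal_self K.one_is_normal] .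
  then have "(carrier H \<times> {\<one>\<^bsub>K\<^esub>}) <#>\<^bsub>G\<^esub> M = carrier G"
    using G.normal_set_mult_maximal_eq_carrier assms(1,2) by blast
  then have "(\<one>\<^bsub>H\<^esub>, k) \<in> (carrier H \<times> {\<one>\<^bsub>K\<^esub>}) <#>\<^bsub>G\<^esub> M"
    using assms(3) by simp
  then obtain h m where h: "h \<in> carrier H" and m: "m \<in> M"
    and eq: "(\<one>\<^bsub>H\<^esub>, k) = (h, \<one>\<^bsub>K\<^esub>) \<otimes>\<^bsub>G\<^esub> m"
    unfolding set_mult_def by auto
  obtain a b where m_eq: "m = (a, b)"
    by (cases m)
  have "b \<in> carrier K"
    using m m_eq assms(1) subgroup.subset unfolding maximal_subgroup_def by fastforce
  then have "b = k"
    using eq m_eq by simp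
  moreover have "a \<in> carrier H"
    using m m_eq assms(1) subgroup.subset unfolding maximal_subgroup_def by fastforce
  ultimately show ?thesis
    using m m_eq by blast
qed

lemma normal_fst_slice:
  assumes M: "maximal_subgroup M G" and "\<not> {\<one>\<^bsub>H\<^esub>} \<times> carrier K \<subseteq> M"
  shows "fst_slice M \<lhd> H"
  unfolding H.normal_inv_iff
proof (intro conjI ballI)
  have sub: "subgroup M G"
    using M unfolding maximal_subgroup_def by blast
  then show "subgroup (fst_slice M) H"
    by (rule subgroup_fst_slice)
  fix x h assume x: "x \<in> carrier H" and h: "h \<in> fst_slice M"
  obtain k where k: "k \<in> carrier K" "(x, k) \<in> M"
    using fst_image_maximal_subgroup[OF assms x] by blast
  have hM: "(h, \<one>\<^bsub>K\<^esub>) \<in> M" and hH: "h \<in> carrier H"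
    using h unfolding fst_slice_def by auto
  have "(x, k) \<otimes>\<^bsub>G\<^esub> (h, \<one>\<^bsub>K\<^esub>) \<otimes>\<^bsub>G\<^esub> inv\<^bsub>G\<^esub> (x, k) \<in> M"
    using k(2) hM sub by (simp only: subgroup.m_closed subgroup.m_inv_closed)
  then show "x \<otimes>\<^bsub>H\<^esub> h \<otimes>\<^bsub>H\<^esub> inv\<^bsub>H\<^esub> x \<in> fst_slice M"
    using x k(1) hH unfolding fst_slice_def by simp
qed

lemma normal_snd_slice:
  assumes M: "maximal_subgroup M G" and "\<not> carrier H \<times> {\<one>\<^bsub>K\<^esub>} \<subseteq> M"
  shows "snd_slice M \<lhd> K"
  unfolding K.normal_inv_iff
proof (intro conjI ballI)
  have sub: "subgroup M G"
    using M unfolding maximal_subgroup_def by blast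
  then show "subgroup (snd_slice M) K"
    by (rule subgroup_snd_slice)
  fix x k assume x: "x \<in> carrier K" and k: "k \<in> snd_slice M"
  obtain h where h: "h \<in> carrier H" "(h, x) \<in> M"
    using snd_image_maximal_subgroup[OF assms x] by blast
  have kM: "(\<one>\<^bsub>H\<^esub>, k) \<in> M" and kK: "k \<in> carrier K"
    using k unfolding snd_slice_def by auto
  have "(h, x) \<otimes>\<^bsub>G\<^esub> (\<one>\<^bsub>H\<^esub>, k) \<otimes>\<^bsub>G\<^esub> inv\<^bsub>G\<^esub> (h, x) \<in> M"
    using h(2) kM sub by (simp only: subgroup.m_closed subgroup.m_inv_closed)
  then show "x \<otimes>\<^bsub>K\<^esub> k \<otimes>\<^bsub>K\<^esub> inv\<^bsub>K\<^esub> x \<in> snd_slice M"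
    using x h(1) kK unfolding snd_slice_def by simp
qed

lemma fst_slice_maximal_normal:
  assumes M: "maximal_subgroup M G" and N: "N \<lhd> H" "fst_slice M \<subseteq> N"
  shows "N = fst_slice M \<or> N = carrier H"
proof (cases "N = fst_slice M")
  case False
  then obtain n where n: "n \<in> N" "n \<notin> fst_slice M"
    using N(2) by blast
  have "N \<times> {\<one>\<^bsub>K\<^esub>} \<lhd> G"
    using H.DirProd_normal[OF K.is_group N(1) K.one_is_normal] .
  moreover have "\<not> N \<times> {\<one>\<^bsub>K\<^esub>} \<subseteq> M"
    using n normal_imp_subgroup[OF N(1)] subgroup.subset unfolding fst_slice_def by fastforce
  ultimately have prod: "(N \<times> {\<one>\<^bsub>K\<^esub>}) <#>\<^bsub>G\<^esub> M = carrier G"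
    using G.normal_set_mult_maximal_eq_carrier M by blast
  have "h \<in> N" if h: "h \<in> carrier H" for h
  proof -
    have "(h, \<one>\<^bsub>K\<^esub>) \<in> (N \<times> {\<one>\<^bsub>K\<^esub>}) <#>\<^bsub>G\<^esub> M"
      using prod h by simp
    then obtain n m where n: "n \<in> N" and m: "m \<in> M"
      and eq: "(h, \<one>\<^bsub>K\<^esub>) = (n, \<one>\<^bsub>K\<^esub>) \<otimes>\<^bsub>G\<^esub> m"
      unfolding set_mult_def by auto
    obtain a b where m_eq: "m = (a, b)"
      by (cases m)
    have ab: "a \<in> carrier H" "b \<in> carrier K"
      using m m_eq M subgroup.subset unfolding maximal_subgroup_def by fastforce+
    then have "b = \<one>\<^bsub>K\<^esub>" "h = n \<otimes>\<^bsub>H\<^esub> a"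
      using eq m_eq by auto
    then have "a \<in> N"
      using m m_eq ab N(2) unfolding fst_slice_def by auto
    then show "h \<in> N"
      using n \<open>h = n \<otimes>\<^bsub>H\<^esub> a\<close> normal_imp_subgroup[OF N(1)] by (simp add: subgroup.m_closed)
  qed
  then show ?thesis
    using normal_imp_subgroup[OF N(1)] subgroup.subset by blast
qed simp

lemma snd_slice_maximal_normal:
  assumes M: "maximal_subgroup M G" and N: "N \<lhd> K" "snd_slice M \<subseteq> N"
  shows "N = snd_slice M \<or> N = carrier K"
proof (cases "N = snd_slice M")
  case False
  then obtain n where n: "n \<in> N" "n \<notin> snd_slice M"
    using N(2) by blast
  have "{\<one>\<^bsub>H\<^esub>} \<times> N \<lhd> G"
    using H.DirProd_normal[OF K.is_group H.one_is_normal N(1)] .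
  moreover have "\<not> {\<one>\<^bsub>H\<^esub>} \<times> N \<subseteq> M"
    using n normal_imp_subgroup[OF N(1)] subgroup.subset unfolding snd_slice_def by fastforce
  ultimately have prod: "({\<one>\<^bsub>H\<^esub>} \<times> N) <#>\<^bsub>G\<^esub> M = carrier G"
    using G.normal_set_mult_maximal_eq_carrier M by blast
  have "k \<in> N" if k: "k \<in> carrier K" for k
  proof -
    have "(\<one>\<^bsub>H\<^esub>, k) \<in> ({\<one>\<^bsub>H\<^esub>} \<times> N) <#>\<^bsub>G\<^esub> M"
      using prod k by simp
    then obtain n m where n: "n \<in> N" and m: "m \<in> M"
      and eq: "(\<one>\<^bsub>H\<^esub>, k) = (\<one>\<^bsub>H\<^esub>, n) \<otimes>\<^bsub>G\<^esub> m"
      unfolding set_mult_def by auto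
    obtain a b where m_eq: "m = (a, b)"
      by (cases m)
    have ab: "a \<in> carrier H" "b \<in> carrier K"
      using m m_eq M subgroup.subset unfolding maximal_subgroup_def by fastforce+
    then have "a = \<one>\<^bsub>H\<^esub>" "k = n \<otimes>\<^bsub>K\<^esub> b"
      using eq m_eq by auto
    then have "b \<in> N"
      using m m_eq ab N(2) unfolding snd_slice_def by auto
    then show "k \<in> N"
      using n \<open>k = n \<otimes>\<^bsub>K\<^esub> b\<close> normal_imp_subgroup[OF N(1)] by (simp add: subgroup.m_closed)
  qed
  then show ?thesis
    using normal_imp_subgroup[OF N(1)] subgroup.subset by blast
qed simp

lemma derived_set_snd_slice:
  assumes M: "maximal_subgroup M G" and "\<not> carrier H \<times> {\<one>\<^bsub>K\<^esub>} \<subseteq> M"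
    and derived_H: "derived_set H (carrier H) \<subseteq> fst_slice M"
  shows "derived_set K (carrier K) \<subseteq> snd_slice M"
proof
  have sub: "subgroup M G"
    using M unfolding maximal_subgroup_def by blast
  fix c assume "c \<in> derived_set K (carrier K)"
  then obtain k1 k2 where k: "k1 \<in> carrier K" "k2 \<in> carrier K"
    and c: "c = k1 \<otimes>\<^bsub>K\<^esub> k2 \<otimes>\<^bsub>K\<^esub> inv\<^bsub>K\<^esub> k1 \<otimes>\<^bsub>K\<^esub> inv\<^bsub>K\<^esub> k2"
    by blast
  obtain h1 h2 where h: "h1 \<in> carrier H" "h2 \<in> carrier H" and hk: "(h1, k1) \<in> M" "(h2, k2) \<in> M"
    using snd_image_maximal_subgroup[OF M assms(2)] k by metis
  define d where "d = h1 \<otimes>\<^bsub>H\<^esub> h2 \<otimes>\<^bsub>H\<^esub> inv\<^bsub>H\<^esub> h1 \<otimes>\<^bsub>H\<^esub> inv\<^bsub>H\<^esub> h2"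
  have "(h1, k1) \<otimes>\<^bsub>G\<^esub> (h2, k2) \<otimes>\<^bsub>G\<^esub> inv\<^bsub>G\<^esub> (h1, k1) \<otimes>\<^bsub>G\<^esub> inv\<^bsub>G\<^esub> (h2, k2) \<in> M"
    using hk sub by (simp only: subgroup.m_closed subgroup.m_inv_closed)
  then have dc: "(d, c) \<in> M"
    using h k unfolding c d_def by simp
  have dH: "d \<in> carrier H" and cK: "c \<in> carrier K"
    unfolding c d_def using h k by simp_all
  have "d \<in> derived_set H (carrier H)"
    unfolding d_def using h by blast
  then have "(d, \<one>\<^bsub>K\<^esub>) \<in> M"
    using derived_H unfolding fst_slice_def by blast
  then have "inv\<^bsub>G\<^esub> (d, \<one>\<^bsub>K\<^esub>) \<otimes>\<^bsub>G\<^esub> (d, c) \<in> M"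
    using dc sub by (simp only: subgroup.m_closed subgroup.m_inv_closed)
  then have "(\<one>\<^bsub>H\<^esub>, c) \<in> M"
    using dH cK by simp
  then show "c \<in> snd_slice M"
    unfolding snd_slice_def using cK by simp
qed

lemma derived_set_fst_slice:
  assumes M: "maximal_subgroup M G" and "\<not> {\<one>\<^bsub>H\<^esub>} \<times> carrier K \<subseteq> M"
    and derived_K: "derived_set K (carrier K) \<subseteq> snd_slice M"
  shows "derived_set H (carrier H) \<subseteq> fst_slice M"
proof
  have sub: "subgroup M G"
    using M unfolding maximal_subgroup_def by blast
  fix c assume "c \<in> derived_set H (carrier H)"
  then obtain h1 h2 where h: "h1 \<in> carrier H" "h2 \<in> carrier H"
    and c: "c = h1 \<otimes>\<^bsub>H\<^esub> h2 \<otimes>\<^bsub>H\<^esub> inv\<^bsub>H\<^esub> h1 \<otimes>\<^bsub>H\<^esub> inv\<^bsub>H\<^esub> h2"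
    by blast
  obtain k1 k2 where k: "k1 \<in> carrier K" "k2 \<in> carrier K" and hk: "(h1, k1) \<in> M" "(h2, k2) \<in> M"
    using fst_image_maximal_subgroup[OF M assms(2)] h by metis
  define d where "d = k1 \<otimes>\<^bsub>K\<^esub> k2 \<otimes>\<^bsub>K\<^esub> inv\<^bsub>K\<^esub> k1 \<otimes>\<^bsub>K\<^esub> inv\<^bsub>K\<^esub> k2"
  have "(h1, k1) \<otimes>\<^bsub>G\<^esub> (h2, k2) \<otimes>\<^bsub>G\<^esub> inv\<^bsub>G\<^esub> (h1, k1) \<otimes>\<^bsub>G\<^esub> inv\<^bsub>G\<^esub> (h2, k2) \<in> M"
    using hk sub by (simp only: subgroup.m_closed subgroup.m_inv_closed)
  then have cd: "(c, d) \<in> M"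
    using h k unfolding c d_def by simp
  have cH: "c \<in> carrier H" and dK: "d \<in> carrier K"
    unfolding c d_def using h k by simp_all
  have "d \<in> derived_set K (carrier K)"
    unfolding d_def using k by blast
  then have "(\<one>\<^bsub>H\<^esub>, d) \<in> M"
    using derived_K unfolding snd_slice_def by blast
  then have "(c, d) \<otimes>\<^bsub>G\<^esub> inv\<^bsub>G\<^esub> (\<one>\<^bsub>H\<^esub>, d) \<in> M"
    using cd sub by (simp only: subgroup.m_closed subgroup.m_inv_closed)
  then have "(c, \<one>\<^bsub>K\<^esub>) \<in> M"
    using cH dK by simp
  then show "c \<in> fst_slice M"
    unfolding fst_slice_def using cH by simp
qed

definition diagonal :: "('a \<times> 'b) set \<Rightarrow> bool" where
  "diagonal M \<longleftrightarrow> \<not> {\<one>\<^bsub>H\<^esub>} \<times> carrier K \<subseteq> M \<and> \<not> carrier H \<times> {\<one>\<^bsub>K\<^esub>} \<subseteq> M"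

lemma slices_of_diagonal_maximal_subgroup:
  assumes solvable: "solvable H \<or> solvable K"
    and M: "maximal_subgroup M G" and "diagonal M"
  shows "maximal_subgroup (fst_slice M) H" "fst_slice M \<lhd> H"
    and "maximal_subgroup (snd_slice M) K" "snd_slice M \<lhd> K"
proof -
  have not_K: "\<not> {\<one>\<^bsub>H\<^esub>} \<times> carrier K \<subseteq> M" and not_H: "\<not> carrier H \<times> {\<one>\<^bsub>K\<^esub>} \<subseteq> M"
    using \<open>diagonal M\<close> unfolding diagonal_def by auto
  show A: "fst_slice M \<lhd> H"
    using normal_fst_slice[OF M not_K] .
  show B: "snd_slice M \<lhd> K"
    using normal_snd_slice[OF M not_H] .
  have A_proper: "fst_slice M \<noteq> carrier H"
    using not_H unfolding fst_slice_def by auto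
  have B_proper: "snd_slice M \<noteq> carrier K"
    using not_K unfolding snd_slice_def by auto
  have derived: "derived_set H (carrier H) \<subseteq> fst_slice M \<and> derived_set K (carrier K) \<subseteq> snd_slice M"
    using solvable
  proof
    assume "solvable H"
    then have "derived H (carrier H) \<subseteq> fst_slice M"
      using H.derived_subset_maximal_normal[OF _ A A_proper] fst_slice_maximal_normal[OF M] by blast
    then have "derived_set H (carrier H) \<subseteq> fst_slice M"
      unfolding derived_def by (meson generate.incl subset_iff)
    then show ?thesis
      using derived_set_snd_slice[OF M not_H] by blast
  next
    assume "solvable K"
    then have "derived K (carrier K) \<subseteq> snd_slice M"
      using K.derived_subset_maximal_normal[OF _ B B_proper] snd_slice_maximal_normal[OF M] by blast
    then have "derived_set K (carrier K) \<subseteq> snd_slice M"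
      unfolding derived_def by (meson generate.incl subset_iff)
    then show ?thesis
      using derived_set_fst_slice[OF M not_K] by blast
  qed
  show "maximal_subgroup (fst_slice M) H"
    using H.maximal_subgroup_if_maximal_normal[OF A A_proper] derived fst_slice_maximal_normal[OF M]
    by blast
  show "maximal_subgroup (snd_slice M) K"
    using K.maximal_subgroup_if_maximal_normal[OF B B_proper] derived snd_slice_maximal_normal[OF M]
    by blast
qed

lemma exchange_diagonal:
  assumes solvable: "solvable H \<or> solvable K" and gp: "general_position G S"
    and maximal: "\<forall>X\<in>S. maximal_subgroup X G" and M: "M \<in> S" "diagonal M"
  obtains P where "maximal_subgroup P G" "\<not> diagonal P" "P \<notin> S - {M}"
    "general_position G (insert P (S - {M}))"
proof -
  let ?A = "fst_slice M" and ?B = "snd_slice M" and ?J = "carrier G \<inter> \<Inter>(S - {M})"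
  have subgroups: "\<And>X. X \<in> S \<Longrightarrow> subgroup X G"
    using maximal unfolding maximal_subgroup_def by blast
  have M_max: "maximal_subgroup M G"
    using maximal M(1) by blast
  note slices = slices_of_diagonal_maximal_subgroup[OF solvable M_max M(2)]
  have "subgroup (\<Inter>(insert (carrier G) (S - {M}))) G"
    using subgroups G.subgroup_self by (intro G.subgroups_Inter) auto
  then have J: "subgroup ?J G"
    by simp
  have "\<not> ?J \<subseteq> M"
    using gp M(1) unfolding general_position_iff by blast
  moreover have "(?A \<times> carrier K) \<inter> (carrier H \<times> ?B) \<subseteq> M"
  proof clarify
    fix h k assume "h \<in> ?A" "k \<in> ?B"
    then have "(h, \<one>\<^bsub>K\<^esub>) \<otimes>\<^bsub>G\<^esub> (\<one>\<^bsub>H\<^esub>, k) \<in> M" "h \<in> carrier H" "k \<in> carrier K"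
      using M_max unfolding fst_slice_def snd_slice_def maximal_subgroup_def
      by (auto simp only: subgroup.m_closed mem_Collect_eq)
    then show "(h, k) \<in> M"
      by simp
  qed
  ultimately have "\<not> ?J \<subseteq> ?A \<times> carrier K \<or> \<not> ?J \<subseteq> carrier H \<times> ?B"
    by (meson le_inf_iff order_trans)
  then obtain P where P: "P = ?A \<times> carrier K \<or> P = carrier H \<times> ?B" "\<not> ?J \<subseteq> P"
    by metis
  have P_props: "maximal_subgroup P G \<and> P \<lhd> G \<and> \<not> diagonal P"
    using P(1)
  proof (elim disjE)
    assume "P = ?A \<times> carrier K"
    then show ?thesis
      using slices(1,2) maximal_subgroup_Times_carrier_iff
        H.DirProd_normal[OF K.is_group slices(2) K.normal_self]
        subgroup.one_closed[OF normal_imp_subgroup[OF slices(2)]]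
      unfolding diagonal_def by auto
  next
    assume "P = carrier H \<times> ?B"
    then show ?thesis
      using slices(3,4) maximal_subgroup_carrier_Times_iff
        H.DirProd_normal[OF K.is_group H.normal_self slices(4)]
        subgroup.one_closed[OF normal_imp_subgroup[OF slices(4)]]
      unfolding diagonal_def by auto
  qed
  then have "P <#>\<^bsub>G\<^esub> ?J = carrier G"
    using G.maximal_normal_set_mult_eq_carrier J P(2) by blast
  moreover have "subgroup P G" "P \<noteq> carrier G"
    using P_props unfolding maximal_subgroup_def by auto
  ultimately show ?thesis
    using that P_props G.general_position_exchange[OF gp subgroups M(1)] by blast
qed

lemma exists_general_position_without_diagonal:
  assumes solvable: "solvable H \<or> solvable K"
  shows "general_position G S \<Longrightarrow> \<forall>X\<in>S. maximal_subgroup X G \<Longrightarrow>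
    \<exists>S'. general_position G S' \<and> (\<forall>X\<in>S'. maximal_subgroup X G) \<and> (\<forall>X\<in>S'. \<not> diagonal X)
      \<and> card S' = card S"
proof (induction "card {X\<in>S. diagonal X}" arbitrary: S rule: less_induct)
  case less
  show ?case
  proof (cases "\<exists>M\<in>S. diagonal M")
    case False
    then show ?thesis
      using less.prems by blast
  next
    case True
    then obtain M where M: "M \<in> S" "diagonal M"
      by blast
    obtain P where P: "maximal_subgroup P G" "\<not> diagonal P" "P \<notin> S - {M}"
      "general_position G (insert P (S - {M}))"
      using exchange_diagonal[OF solvable less.prems M] by blast
    have "finite S"
      using less.prems(1) unfolding general_position_def by blast
    then have "card (insert P (S - {M})) = Suc (card (S - {M}))"
      using P(3) by (simp add: card_insert_disjoint)
    also have "\<dots> = card S"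
      using card_Suc_Diff1[OF \<open>finite S\<close> M(1)] .
    finally have "card (insert P (S - {M})) = card S" .
    moreover have "{X \<in> insert P (S - {M}). diagonal X} = {X \<in> S. diagonal X} - {M}"
      using P(2) by auto
    moreover have "card ({X \<in> S. diagonal X} - {M}) < card {X \<in> S. diagonal X}"
      by (rule card_Diff1_less) (use \<open>finite S\<close> M in auto)
    ultimately have "card {X \<in> insert P (S - {M}). diagonal X} < card {X \<in> S. diagonal X}"
      by (simp only:)
    moreover have "\<forall>X\<in>insert P (S - {M}). maximal_subgroup X G"
      using less.prems(2) P(1) by blast
    ultimately obtain S' where "general_position G S'" "\<forall>X\<in>S'. maximal_subgroup X G"
      "\<forall>X\<in>S'. \<not> diagonal X" "card S' = card (insert P (S - {M}))"
      using less.hyps P(4) by blast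
    then show ?thesis
      using \<open>card (insert P (S - {M})) = card S\<close> by auto
  qed
qed

definition product_family :: "'a set set \<Rightarrow> 'b set set \<Rightarrow> ('a \<times> 'b) set set" where
  "product_family SA SB = (\<lambda>A. A \<times> carrier K) ` SA \<union> (\<lambda>B. carrier H \<times> B) ` SB"

lemma Inter_product_family:
  "carrier G \<inter> \<Inter>(product_family SA SB) = (carrier H \<inter> \<Inter>SA) \<times> (carrier K \<inter> \<Inter>SB)"
  unfolding product_family_def by auto

lemma inj_on_Times_carrier: "inj_on (\<lambda>A. A \<times> carrier K) S"
  by (rule inj_onI) (simp add: Times_eq_cancel2[OF K.one_closed])

lemma inj_on_carrier_Times: "inj_on (\<lambda>B. carrier H \<times> B) T"
  by (rule inj_onI) (use H.one_closed in \<open>blast elim: equalityE\<close>)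

context
  fixes SA SB
  assumes SA: "\<forall>A\<in>SA. subgroup A H \<and> A \<noteq> carrier H"
    and SB: "\<forall>B\<in>SB. subgroup B K \<and> B \<noteq> carrier K"
begin

lemma product_family_disjoint: "(\<lambda>A. A \<times> carrier K) ` SA \<inter> (\<lambda>B. carrier H \<times> B) ` SB = {}"
proof -
  have "A \<times> carrier K \<noteq> carrier H \<times> B" if "A \<in> SA" "B \<in> SB" for A B
  proof
    assume eq: "A \<times> carrier K = carrier H \<times> B"
    have "carrier H \<subseteq> A"
      using eq subgroup.one_closed[of B K] SB \<open>B \<in> SB\<close> by blast
    then show False
      using SA \<open>A \<in> SA\<close> subgroup.subset by blast
  qed
  then show ?thesis
    by blast
qed

lemma card_product_family:
  assumes "finite SA" "finite SB"
  shows "card (product_family SA SB) = card SA + card SB"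
  unfolding product_family_def
  using card_Un_disjoint[OF finite_imageI[OF assms(1)] finite_imageI[OF assms(2)]
      product_family_disjoint]
  by (simp only: card_image[OF inj_on_Times_carrier] card_image[OF inj_on_carrier_Times])

lemma general_position_product_family_iff:
  "general_position G (product_family SA SB) \<longleftrightarrow> general_position H SA \<and> general_position K SB"
proof -
  have times_subset_left: "I \<times> J \<subseteq> A \<times> carrier K \<longleftrightarrow> I \<subseteq> A"
    if "j \<in> J" "J \<subseteq> carrier K" for I J A and j :: 'b
    using that by blast
  have times_subset_right: "I \<times> J \<subseteq> carrier H \<times> B \<longleftrightarrow> J \<subseteq> B"
    if "i \<in> I" "I \<subseteq> carrier H" for I J B and i :: 'a
    using that by blast
  have one_H: "\<one>\<^bsub>H\<^esub> \<in> carrier H \<inter> \<Inter>SA'" if "SA' \<subseteq> SA" for SA'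
    using that SA subgroup.one_closed by fastforce
  have one_K: "\<one>\<^bsub>K\<^esub> \<in> carrier K \<inter> \<Inter>SB'" if "SB' \<subseteq> SB" for SB'
    using that SB subgroup.one_closed by fastforce
  have "finite (product_family SA SB) \<longleftrightarrow> finite SA \<and> finite SB"
    unfolding product_family_def
    by (simp only: finite_Un finite_image_iff[OF inj_on_Times_carrier]
        finite_image_iff[OF inj_on_carrier_Times])
  moreover have "\<not> carrier G \<inter> \<Inter>(product_family SA SB - {A \<times> carrier K}) \<subseteq> A \<times> carrier K
      \<longleftrightarrow> \<not> carrier H \<inter> \<Inter>(SA - {A}) \<subseteq> A" if "A \<in> SA" for A
  proof -
    have "product_family SA SB - {A \<times> carrier K} = product_family (SA - {A}) SB"
      using product_family_disjoint that unfolding product_family_def by auto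
    then have "carrier G \<inter> \<Inter>(product_family SA SB - {A \<times> carrier K})
        = (carrier H \<inter> \<Inter>(SA - {A})) \<times> (carrier K \<inter> \<Inter>SB)"
      by (simp only: Inter_product_family)
    then show ?thesis
      using one_K[of SB] by (simp only: times_subset_left) blast
  qed
  moreover have "\<not> carrier G \<inter> \<Inter>(product_family SA SB - {carrier H \<times> B}) \<subseteq> carrier H \<times> B
      \<longleftrightarrow> \<not> carrier K \<inter> \<Inter>(SB - {B}) \<subseteq> B" if "B \<in> SB" for B
  proof -
    have "product_family SA SB - {carrier H \<times> B} = product_family SA (SB - {B})"
      using product_family_disjoint that unfolding product_family_def by auto
    then have "carrier G \<inter> \<Inter>(product_family SA SB - {carrier H \<times> B})
        = (carrier H \<inter> \<Inter>SA) \<times> (carrier K \<inter> \<Inter>(SB - {B}))"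
      by (simp only: Inter_product_family)
    then show ?thesis
      using one_H[of SA] by (simp only: times_subset_right) blast
  qed
  ultimately show ?thesis
    unfolding general_position_iff by (auto simp: product_family_def)
qed

end

lemma maximal_subgroups_product_family_iff:
  "(\<forall>X\<in>product_family SA SB. maximal_subgroup X G)
     \<longleftrightarrow> (\<forall>A\<in>SA. maximal_subgroup A H) \<and> (\<forall>B\<in>SB. maximal_subgroup B K)"
  unfolding product_family_def
  by (simp add: ball_Un Ball_image_comp comp_def maximal_subgroup_Times_carrier_iff
      maximal_subgroup_carrier_Times_iff)

lemma product_family_slices:
  assumes "\<forall>X\<in>S. subgroup X G \<and> \<not> diagonal X"
  shows "product_family (fst_slice ` {X \<in> S. {\<one>\<^bsub>H\<^esub>} \<times> carrier K \<subseteq> X})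
                        (snd_slice ` {X \<in> S. \<not> {\<one>\<^bsub>H\<^esub>} \<times> carrier K \<subseteq> X}) = S"
proof -
  have "fst_slice X \<times> carrier K = X" if "X \<in> {X \<in> S. {\<one>\<^bsub>H\<^esub>} \<times> carrier K \<subseteq> X}" for X
    using that assms Times_fst_slice by blast
  then have "(\<lambda>A. A \<times> carrier K) ` fst_slice ` {X \<in> S. {\<one>\<^bsub>H\<^esub>} \<times> carrier K \<subseteq> X}
      = {X \<in> S. {\<one>\<^bsub>H\<^esub>} \<times> carrier K \<subseteq> X}"
    unfolding image_image by simp
  moreover have "carrier H \<times> snd_slice X = X"
    if "X \<in> {X \<in> S. \<not> {\<one>\<^bsub>H\<^esub>} \<times> carrier K \<subseteq> X}" for X
    using that assms carrier_Times_snd_slice unfolding diagonal_def by blast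
  then have "(\<lambda>B. carrier H \<times> B) ` snd_slice ` {X \<in> S. \<not> {\<one>\<^bsub>H\<^esub>} \<times> carrier K \<subseteq> X}
      = {X \<in> S. \<not> {\<one>\<^bsub>H\<^esub>} \<times> carrier K \<subseteq> X}"
    unfolding image_image by simp
  ultimately show ?thesis
    unfolding product_family_def by auto
qed

lemma MaxDim_DirProd_ge:
  assumes "finite (carrier H)" "finite (carrier K)"
  shows "MaxDim H + MaxDim K \<le> MaxDim G"
proof -
  obtain SA where SA: "\<forall>A\<in>SA. maximal_subgroup A H" "general_position H SA" "card SA = MaxDim H"
    using MaxDim_attained[OF assms(1)] by blast
  obtain SB where SB: "\<forall>B\<in>SB. maximal_subgroup B K" "general_position K SB" "card SB = MaxDim K"
    using MaxDim_attained[OF assms(2)] by blast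
  have proper: "\<forall>A\<in>SA. subgroup A H \<and> A \<noteq> carrier H" "\<forall>B\<in>SB. subgroup B K \<and> B \<noteq> carrier K"
    using SA(1) SB(1) unfolding maximal_subgroup_def by auto
  have "card (product_family SA SB) \<le> MaxDim G"
  proof (rule card_le_MaxDim)
    show "finite (carrier G)"
      using assms by simp
    show "\<forall>X\<in>product_family SA SB. maximal_subgroup X G"
      using maximal_subgroups_product_family_iff SA(1) SB(1) by blast
    show "general_position G (product_family SA SB)"
      using general_position_product_family_iff[OF proper] SA(2) SB(2) by blast
  qed
  moreover have "finite SA" "finite SB"
    using SA(2) SB(2) unfolding general_position_def by auto
  ultimately show ?thesis
    using card_product_family[OF proper] SA(3) SB(3) by simp
qed

lemma MaxDim_DirProd_le:
  assumes "finite (carrier H)" "finite (carrier K)" and solvable: "solvable H \<or> solvable K"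
  shows "MaxDim G \<le> MaxDim H + MaxDim K"
proof -
  have "finite (carrier G)"
    using assms by simp
  then obtain S where S: "\<forall>X\<in>S. maximal_subgroup X G" "general_position G S" "card S = MaxDim G"
    using MaxDim_attained by blast
  then obtain S' where S': "general_position G S'" "\<forall>X\<in>S'. maximal_subgroup X G"
    "\<forall>X\<in>S'. \<not> diagonal X" "card S' = card S"
    using exists_general_position_without_diagonal[OF solvable] by blast
  define SA where "SA = fst_slice ` {X \<in> S'. {\<one>\<^bsub>H\<^esub>} \<times> carrier K \<subseteq> X}"
  define SB where "SB = snd_slice ` {X \<in> S'. \<not> {\<one>\<^bsub>H\<^esub>} \<times> carrier K \<subseteq> X}"
  have S'_eq: "product_family SA SB = S'"
    unfolding SA_def SB_def using S'(2,3) product_family_slices unfolding maximal_subgroup_def by blast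
  then have maximal: "\<forall>A\<in>SA. maximal_subgroup A H" "\<forall>B\<in>SB. maximal_subgroup B K"
    using S'(2) maximal_subgroups_product_family_iff by blast+
  then have proper: "\<forall>A\<in>SA. subgroup A H \<and> A \<noteq> carrier H" "\<forall>B\<in>SB. subgroup B K \<and> B \<noteq> carrier K"
    unfolding maximal_subgroup_def by auto
  have "general_position H SA" "general_position K SB"
    using general_position_product_family_iff[OF proper] S'_eq S'(1) by blast+
  then have "card SA \<le> MaxDim H" "card SB \<le> MaxDim K" "finite SA" "finite SB"
    using card_le_MaxDim assms(1,2) maximal unfolding general_position_def by blast+
  then show ?thesis
    using card_product_family[OF proper] S'_eq S'(4) S(3) by simp
qed

end

theorem corollary2p4:
  fixes H :: "('a, 'c) monoid_scheme" and K :: "('b, 'd) monoid_scheme"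
  assumes "group H" and "group K"
    and "finite (carrier H)" and "finite (carrier K)"
    and "solvable H \<or> solvable K"
  shows "MaxDim (H \<times>\<times> K) = MaxDim H + MaxDim K"
proof -
  interpret group_pair H K
    using assms(1,2) unfolding group_pair_def by blast
  show ?thesis
    using MaxDim_DirProd_ge[OF assms(3,4)] MaxDim_DirProd_le[OF assms(3,4,5)] by simp
qed

end
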